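(* Let $S,T\subseteq\mathbb{Z}_{>0}$ be finite with $T\preceq S$, and let $S'\subseteq S$ with $S'\neq S$. Let $a=\min(S\setminus S')$ and $b=\min((T\triangleleft S)\setminus(T\triangleleft S'))$. Then $T\triangleleft(S\setminus\{a\})=(T\triangleleft S)\setminus\{b\}$.
   Context: For a finite set $S\subseteq\mathbb{Z}_{>0}$, $S(i)$ denotes its $i$th smallest element. $T\preceq S$ means $|T|\ge|S|$ and $T(i)<S(i)$ for all $i\in[|S|]$. For finite $S,T$, $T\triangleleft S$ is computed by going through $S$ from largest to smallest; each $s$ picks the largest element of $T$ less than $s$ not yet picked (if one exists); $T\triangleleft S$ is the set of picked elements. *)

theory Defs
  imports Main
begin

text \<open>S(i), the i-th smallest element (1-indexed) of a finite set S of naturals.\<close>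
definition ith :: "nat set \<Rightarrow> nat \<Rightarrow> nat" where
  "ith S i = sorted_list_of_set S ! (i - 1)"

definition dom_prec :: "nat set \<Rightarrow> nat set \<Rightarrow> bool" where
  "dom_prec T S \<longleftrightarrow> card T \<ge> card S \<and> (\<forall>i\<in>{1..card S}. ith T i < ith S i)"

fun tri_aux :: "nat list \<Rightarrow> nat set \<Rightarrow> nat set" where
  "tri_aux [] A = {}"
| "tri_aux (s # ss) A =
     (let C = {t \<in> A. t < s} in
      if C = {} then tri_aux ss A
      else insert (Max C) (tri_aux ss (A - {Max C})))"

definition tri :: "nat set \<Rightarrow> nat set \<Rightarrow> nat set" where
  "tri T S = tri_aux (rev (sorted_list_of_set S)) T"

end

theory Submission
  imports Defs
begin

text \<open>Read the elements of S as closing and those of T as opening brackets. Then the greedy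
  matching has a closed form: t \<in> T is picked iff some window (t, x] contains more elements of S
  than T has in (t, x). In this form T \<triangleleft> S is monotone in S, and T \<preceq> S is a
  Hall-type condition ensuring that every element of S gets matched, so |T \<triangleleft> S| = |S|.
  Hence deleting a = min (S - S') removes at least one element from T \<triangleleft> S, and every
  removed element lies in (T \<triangleleft> S) - (T \<triangleleft> S'). A count over the witnessing
  windows shows that no removed element lies above an element of that difference, so exactly one
  element is removed, namely b.\<close>

lemma Max_below:
  fixes A :: "nat set"
  assumes "finite A" "{t \<in> A. t < s} \<noteq> {}"
  shows "Max {t \<in> A. t < s} \<in> A" "Max {t \<in> A. t < s} < s"
    and "\<And>u. u \<in> A \<Longrightarrow> u < s \<Longrightarrow> u \<le> Max {t \<in> A. t < s}"
proof -
  have "Max {t \<in> A. t < s} \<in> {t \<in> A. t < s}" using assms by (intro Max_in) auto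
  then show "Max {t \<in> A. t < s} \<in> A" "Max {t \<in> A. t < s} < s" by auto
  show "u \<le> Max {t \<in> A. t < s}" if "u \<in> A" "u < s" for u
    using assms(1) that by (intro Max_ge) auto
qed

lemma tri_aux_Cons_none: "{t \<in> A. t < s} = {} \<Longrightarrow> tri_aux (s # ss) A = tri_aux ss A"
  by (simp add: Let_def)

lemma tri_aux_Cons_Max:
  "{t \<in> A. t < s} \<noteq> {} \<Longrightarrow>
    tri_aux (s # ss) A = insert (Max {t \<in> A. t < s}) (tri_aux ss (A - {Max {t \<in> A. t < s}}))"
  by (simp only: tri_aux.simps Let_def if_False)

declare tri_aux.simps(2) [simp del]

lemma tri_aux_subset: "finite A \<Longrightarrow> tri_aux ss A \<subseteq> A"
proof (induction ss arbitrary: A)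
  case Nil
  show ?case by simp
next
  case (Cons s ss)
  show ?case
  proof (cases "{t \<in> A. t < s} = {}")
    case True
    then show ?thesis using Cons by (simp add: tri_aux_Cons_none)
  next
    case False
    have "Max {t \<in> A. t < s} \<in> A" using Cons.prems False by (rule Max_below(1))
    then show ?thesis
      unfolding tri_aux_Cons_Max[OF False]
      using Cons.IH[of "A - {Max {t \<in> A. t < s}}"] Cons.prems by auto
  qed
qed

lemma card_tri_aux_le: "card (tri_aux ss A) \<le> length ss"
proof (induction ss arbitrary: A)
  case Nil
  show ?case by simp
next
  case (Cons s ss)
  show ?case
  proof (cases "{t \<in> A. t < s} = {}")
    case True
    then show ?thesis using Cons.IH by (simp add: tri_aux_Cons_none le_SucI)
  next
    case False
    then show ?thesis
      unfolding tri_aux_Cons_Max[OF False]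
      using Cons.IH[of "A - {Max {t \<in> A. t < s}}"] by (intro card_insert_le_m1) simp_all
  qed
qed

definition matched :: "nat set \<Rightarrow> nat set \<Rightarrow> nat set" where
  "matched T S = {t\<in>T. \<exists>x>t. card (T \<inter> {t<..<x}) < card (S \<inter> {t<..x})}"

lemma matched_eq_empty:
  assumes "\<And>t y. t \<in> T \<Longrightarrow> y \<in> S \<Longrightarrow> y \<le> t"
  shows "matched T S = {}"
proof -
  have "S \<inter> {t<..x} = {}" if "t \<in> T" for t x
    using assms[OF that] by force
  then show ?thesis by (auto simp: matched_def)
qed

lemma card_Int_Suc_Diff1:
  "finite (A \<inter> I) \<Longrightarrow> m \<in> A \<Longrightarrow> m \<in> I \<Longrightarrow> card (A \<inter> I) = Suc (card ((A - {m}) \<inter> I))"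
proof -
  assume "finite (A \<inter> I)" "m \<in> A" "m \<in> I"
  moreover have "(A - {m}) \<inter> I = (A \<inter> I) - {m}" by auto
  ultimately show ?thesis using card_Suc_Diff1[of "A \<inter> I" m] by simp
qed

lemma surplus_window_Diff_Max:
  fixes A S :: "nat set"
  assumes mA: "m \<in> A" "m < s" and tm: "t < m"
    and surplus: "card (A \<inter> {t<..<x}) < card (insert s S \<inter> {t<..x})"
  shows "card ((A - {m}) \<inter> {t<..<x}) < card (S \<inter> {t<..x})"
proof (cases "x \<le> m")
  case True
  then have "(A - {m}) \<inter> {t<..<x} = A \<inter> {t<..<x}" "insert s S \<inter> {t<..x} = S \<inter> {t<..x}"
    using mA(2) by auto
  then show ?thesis using surplus by simp
next
  case False
  have "card (A \<inter> {t<..<x}) = Suc (card ((A - {m}) \<inter> {t<..<x}))"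
    using mA(1) tm False by (intro card_Int_Suc_Diff1) auto
  moreover have "card (insert s S \<inter> {t<..x}) \<le> Suc (card (S \<inter> {t<..x}))"
    by (simp add: Int_insert_left card_insert_if)
  ultimately show ?thesis using surplus by linarith
qed

lemma surplus_window_insert_Max:
  fixes A S :: "nat set"
  assumes mA: "m \<in> A" "m < s" and m_max: "\<And>u. u \<in> A \<Longrightarrow> u < s \<Longrightarrow> u \<le> m"
    and s_notin: "s \<notin> S" and tm: "t < m" and x: "t < x"
    and surplus: "card ((A - {m}) \<inter> {t<..<x}) < card (S \<inter> {t<..x})"
  shows "\<exists>x>t. card (A \<inter> {t<..<x}) < card (insert s S \<inter> {t<..x})"
proof -
  have A_Suc: "card (A \<inter> {t<..<z}) = Suc (card ((A - {m}) \<inter> {t<..<z}))" if "m < z" for z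
    using mA(1) tm that by (intro card_Int_Suc_Diff1) auto
  have S_Suc: "card (insert s S \<inter> {t<..z}) = Suc (card (S \<inter> {t<..z}))" if "s \<le> z" for z
    using card_Int_Suc_Diff1[of "insert s S" "{t<..z}" s] s_notin tm mA(2) that by simp
  consider "x \<le> m" | "s \<le> x" | "m < x" "x < s" by linarith
  then show ?thesis
  proof cases
    case 1
    then have "(A - {m}) \<inter> {t<..<x} = A \<inter> {t<..<x}" "insert s S \<inter> {t<..x} = S \<inter> {t<..x}"
      using mA(2) by auto
    then show ?thesis using x surplus by auto
  next
    case 2
    then show ?thesis using x surplus A_Suc[of x] S_Suc[OF 2] mA(2) by (intro exI[of _ x]) simp
  next
    case 3
    txt \<open>No element of A lies in (m, s), so widening the window to (t, s] only gains s.\<close>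
    have "(A - {m}) \<inter> {t<..<s} = (A - {m}) \<inter> {t<..<x}"
      using 3 m_max by fastforce
    moreover have "card (S \<inter> {t<..x}) \<le> card (S \<inter> {t<..s})"
      using 3 by (intro card_mono) auto
    ultimately show ?thesis
      using surplus A_Suc[OF mA(2)] S_Suc[of s] tm mA(2) by (intro exI[of _ s]) simp
  qed
qed

lemma matched_insert_Max:
  fixes A S :: "nat set"
  assumes fin: "finite A" and S_below: "\<forall>y\<in>S. y < s" and ne: "{t \<in> A. t < s} \<noteq> {}"
  defines "m \<equiv> Max {t \<in> A. t < s}"
  shows "matched A (insert s S) = insert m (matched (A - {m}) S)"
proof -
  note mA = Max_below(1,2)[OF fin ne, folded m_def]
  note m_max = Max_below(3)[OF fin ne, folded m_def]
  have "t \<in> matched A (insert s S) \<longleftrightarrow> t \<in> insert m (matched (A - {m}) S)" for t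
  proof (cases t m rule: linorder_cases)
    case less
    have "s \<notin> S" using S_below by blast
    then show ?thesis
      using surplus_window_insert_Max[OF mA m_max _ less] surplus_window_Diff_Max[OF mA less] less
      by (auto simp: matched_def)
  next
    case equal
    have "A \<inter> {m<..<s} = {}" using m_max by force
    moreover have "0 < card (insert s S \<inter> {m<..s})" using mA by (subst card_gt_0_iff) auto
    ultimately have "m \<in> matched A (insert s S)"
      using mA unfolding matched_def by (auto intro!: exI[of _ s])
    then show ?thesis using equal by simp
  next
    case greater
    have "insert s S \<inter> {t<..x} = {}" if "t \<in> A" for x
      using that greater m_max S_below by fastforce
    then show ?thesis using greater by (auto simp: matched_def)
  qed
  then show ?thesis by blast
qed

lemma tri_aux_eq_matched: "sorted_wrt (>) ss \<Longrightarrow> finite A \<Longrightarrow> tri_aux ss A = matched A (set ss)"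
proof (induction ss arbitrary: A)
  case Nil
  show ?case by (simp add: matched_def)
next
  case (Cons s ss)
  then have ss_below: "\<forall>y\<in>set ss. y < s" and sorted: "sorted_wrt (>) ss" by auto
  show ?case
  proof (cases "{t \<in> A. t < s} = {}")
    case True
    then have "tri_aux (s # ss) A = matched A (set ss)"
      using Cons.IH[OF sorted Cons.prems(2)] by (simp add: tri_aux_Cons_none)
    also have "\<dots> = {}"
      using True ss_below by (intro matched_eq_empty) force
    also have "\<dots> = matched A (set (s # ss))"
      using True ss_below by (intro matched_eq_empty[symmetric]) force
    finally show ?thesis .
  next
    case False
    then show ?thesis
      using Cons.IH[OF sorted] Cons.prems(2) matched_insert_Max[OF Cons.prems(2) ss_below False]
      by (simp add: tri_aux_Cons_Max)
  qed
qed

definition hall_condition :: "nat set \<Rightarrow> nat set \<Rightarrow> bool" where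
  "hall_condition A S \<longleftrightarrow> (\<forall>s\<in>S. card (S \<inter> {..s}) \<le> card (A \<inter> {..<s}))"

lemma hall_condition_below_nonempty:
  assumes "hall_condition A S" "s \<in> S"
  shows "{t \<in> A. t < s} \<noteq> {}"
proof -
  have "0 < card (S \<inter> {..s})" using assms(2) by (subst card_gt_0_iff) auto
  then have "0 < card (A \<inter> {..<s})" using assms unfolding hall_condition_def by fastforce
  then show ?thesis by (auto simp: card_gt_0_iff)
qed

lemma hall_condition_Diff_Max:
  fixes A S :: "nat set"
  assumes fin: "finite A" and hall: "hall_condition A (insert s S)" and S_below: "\<forall>y\<in>S. y < s"
  defines "m \<equiv> Max {t \<in> A. t < s}"
  shows "hall_condition (A - {m}) S"
  unfolding hall_condition_def
proof
  fix s' assume s': "s' \<in> S"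
  have ne: "{t \<in> A. t < s} \<noteq> {}" using hall by (rule hall_condition_below_nonempty) simp
  note mA = Max_below(1,2)[OF fin ne, folded m_def]
  note m_max = Max_below(3)[OF fin ne, folded m_def]
  have hall_s: "card (insert s S \<inter> {..s}) \<le> card (A \<inter> {..<s})"
    and hall_s': "card (insert s S \<inter> {..s'}) \<le> card (A \<inter> {..<s'})"
    using hall s' unfolding hall_condition_def by auto
  show "card (S \<inter> {..s'}) \<le> card ((A - {m}) \<inter> {..<s'})"
  proof (cases "m < s'")
    case True
    have "A \<inter> {..<s'} = A \<inter> {..<s}"
      using True s' S_below m_max by fastforce
    moreover have "card (A \<inter> {..<s'}) = Suc (card ((A - {m}) \<inter> {..<s'}))"
      using mA(1) True by (intro card_Int_Suc_Diff1) auto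
    moreover have "Suc (card (S \<inter> {..s'})) \<le> card (insert s S \<inter> {..s})"
    proof -
      have "s \<notin> S" using S_below by blast
      then have "Suc (card (S \<inter> {..s'})) = card (insert s (S \<inter> {..s'}))" by simp
      also have "\<dots> \<le> card (insert s S \<inter> {..s})" using s' S_below by (intro card_mono) auto
      finally show ?thesis .
    qed
    ultimately show ?thesis using hall_s by simp
  next
    case False
    then have "(A - {m}) \<inter> {..<s'} = A \<inter> {..<s'}" and "insert s S \<inter> {..s'} = S \<inter> {..s'}"
      using s' S_below by auto
    then show ?thesis using hall_s' by simp
  qed
qed

lemma card_tri_aux_eq_length:
  "sorted_wrt (>) ss \<Longrightarrow> finite A \<Longrightarrow> hall_condition A (set ss) \<Longrightarrow>
    card (tri_aux ss A) = length ss"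
proof (induction ss arbitrary: A)
  case Nil
  show ?case by simp
next
  case (Cons s ss)
  then have ss_below: "\<forall>y\<in>set ss. y < s" and sorted: "sorted_wrt (>) ss" by auto
  have ne: "{t \<in> A. t < s} \<noteq> {}"
    using Cons.prems(3) by (rule hall_condition_below_nonempty) simp
  define m where "m = Max {t \<in> A. t < s}"
  have "finite (A - {m})" using Cons.prems(2) by simp
  moreover have "hall_condition (A - {m}) (set ss)"
    unfolding m_def using Cons.prems ss_below by (intro hall_condition_Diff_Max) auto
  ultimately have IH: "card (tri_aux ss (A - {m})) = length ss" using Cons.IH[OF sorted] by blast
  have "tri_aux ss (A - {m}) \<subseteq> A - {m}" using Cons.prems(2) by (intro tri_aux_subset) simp
  then have "m \<notin> tri_aux ss (A - {m})" and "finite (tri_aux ss (A - {m}))"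
    using Cons.prems(2) finite_subset by auto
  then show ?case using IH by (simp add: tri_aux_Cons_Max[OF ne] m_def[symmetric])
qed

lemma set_take_Suc_sorted:
  fixes xs :: "'a::linorder list"
  assumes "sorted_wrt (<) xs" "k < length xs"
  shows "set (take (Suc k) xs) = set xs \<inter> {..xs ! k}"
proof (intro set_eqI iffI)
  fix y assume "y \<in> set (take (Suc k) xs)"
  then obtain j where "j \<le> k" "y = xs ! j"
    using assms(2) by (auto simp: in_set_conv_nth less_Suc_eq_le)
  then show "y \<in> set xs \<inter> {..xs ! k}"
    using assms sorted_nth_mono[OF strict_sorted_imp_sorted[OF assms(1)], of j k] by auto
next
  fix y assume "y \<in> set xs \<inter> {..xs ! k}"
  then obtain j where j: "j < length xs" "y = xs ! j" "xs ! j \<le> xs ! k"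
    by (auto simp: in_set_conv_nth)
  then have "j \<le> k" using sorted_wrt_nth_less[OF assms(1), of k j] assms(2) by fastforce
  then show "y \<in> set (take (Suc k) xs)"
    using j by (auto simp: in_set_conv_nth)
qed

lemma dom_prec_imp_hall_condition:
  assumes fin: "finite S" "finite T" and dom: "dom_prec T S"
  shows "hall_condition T S"
  unfolding hall_condition_def
proof
  fix s assume "s \<in> S"
  define ys where "ys = sorted_list_of_set S"
  define xs where "xs = sorted_list_of_set T"
  have ys: "sorted_wrt (<) ys" "set ys = S" "distinct ys" "length ys = card S"
    and xs: "sorted_wrt (<) xs" "set xs = T" "distinct xs" "length xs = card T"
    unfolding ys_def xs_def using fin by auto
  obtain k where k: "k < length ys" "ys ! k = s"
    using \<open>s \<in> S\<close> ys(2) by (metis in_set_conv_nth)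
  have kx: "k < length xs" using dom k ys xs unfolding dom_prec_def by simp
  have "ith T (Suc k) < ith S (Suc k)" using dom k ys unfolding dom_prec_def by simp
  then have "xs ! k < s" using k unfolding ith_def xs_def ys_def by simp
  then have "set (take (Suc k) xs) \<subseteq> T \<inter> {..<s}"
    using set_take_Suc_sorted[OF xs(1) kx] xs(2) by auto
  then have "card (set (take (Suc k) xs)) \<le> card (T \<inter> {..<s})" by (intro card_mono) auto
  moreover have "S \<inter> {..s} = set (take (Suc k) ys)"
    using set_take_Suc_sorted[OF ys(1) k(1)] ys(2) k(2) by simp
  ultimately show "card (S \<inter> {..s}) \<le> card (T \<inter> {..<s})"
    using k(1) kx xs(3) ys(3) by (simp add: distinct_card)
qed

lemma tri_eq_matched: "finite S \<Longrightarrow> finite T \<Longrightarrow> tri T S = matched T S"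
  unfolding tri_def by (subst tri_aux_eq_matched) (auto simp: sorted_wrt_rev)

lemma card_tri_le: "card (tri T S) \<le> card S"
  unfolding tri_def using card_tri_aux_le by (metis length_rev length_sorted_list_of_set)

lemma card_tri_eq:
  "finite S \<Longrightarrow> finite T \<Longrightarrow> dom_prec T S \<Longrightarrow> card (tri T S) = card S"
  unfolding tri_def
  by (subst card_tri_aux_eq_length) (auto simp: sorted_wrt_rev dom_prec_imp_hall_condition)

lemma matched_mono:
  fixes S1 S2 :: "nat set"
  assumes "S1 \<subseteq> S2"
  shows "matched T S1 \<subseteq> matched T S2"
proof
  fix t assume "t \<in> matched T S1"
  then obtain x where x: "t \<in> T" "x > t" "card (T \<inter> {t<..<x}) < card (S1 \<inter> {t<..x})"
    unfolding matched_def by auto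
  have "card (S1 \<inter> {t<..x}) \<le> card (S2 \<inter> {t<..x})" using assms by (intro card_mono) auto
  then show "t \<in> matched T S2" using x unfolding matched_def by auto
qed

lemma matched_lost_less:
  fixes S T :: "nat set"
  assumes "t \<in> matched T S - matched T (S - {a})"
  shows "t < a"
proof (rule ccontr)
  assume "\<not> t < a"
  then have "(S - {a}) \<inter> {t<..x} = S \<inter> {t<..x}" for x by auto
  then show False using assms unfolding matched_def by auto
qed

lemma matched_lost_le:
  fixes S S' T :: "nat set"
  assumes aS: "a \<in> S" and below_a: "\<And>y. y \<in> S \<Longrightarrow> y < a \<Longrightarrow> y \<in> S'" and sub: "S' \<subseteq> S"
    and t: "t \<in> matched T S - matched T (S - {a})"
    and b: "b \<in> matched T S - matched T S'"
  shows "t \<le> b"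
proof (rule ccontr)
  assume "\<not> t \<le> b"
  then have bt: "b < t" by simp
  have tT: "t \<in> T" and ta: "t < a" using t matched_lost_less[OF t] by (auto simp: matched_def)
  have t_unmatched: "card ((S - {a}) \<inter> {t<..z}) \<le> card (T \<inter> {t<..<z})" if "z > t" for z
    using t tT that unfolding matched_def by auto
  obtain y where bT: "b \<in> T" and y: "y > b" "card (T \<inter> {b<..<y}) < card (S \<inter> {b<..y})"
    using b unfolding matched_def by auto
  have b_unmatched: "card (S' \<inter> {b<..z}) \<le> card (T \<inter> {b<..<z})" if "z > b" for z
    using b bT that unfolding matched_def by auto
  have S'_below_a: "S' \<inter> {b<..z} = S \<inter> {b<..z}" if "z < a" for z
    using that below_a sub by auto
  show False
  proof (cases "y < a")
    case True
    then show False using b_unmatched[OF y(1)] y(2) S'_below_a by simp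
  next
    case False
    then have ty: "t < y" using ta by simp
    txt \<open>Split the window (b, y] at t: below t the set S agrees with S', for which b is
      unmatched; above t it contains a, and S - {a} leaves t unmatched.\<close>
    have "S \<inter> {b<..y} = S \<inter> {b<..t} \<union> S \<inter> {t<..y}" using bt ty by auto
    then have "card (S \<inter> {b<..y}) = card (S \<inter> {b<..t}) + card (S \<inter> {t<..y})"
      by (simp add: card_Un_disjoint disjoint_iff)
    also have "card (S \<inter> {b<..t}) \<le> card (T \<inter> {b<..<t})"
      using b_unmatched[OF bt] S'_below_a[OF ta] by simp
    also have "S \<inter> {t<..y} = insert a ((S - {a}) \<inter> {t<..y})" using aS ta False by auto
    then have "card (S \<inter> {t<..y}) = Suc (card ((S - {a}) \<inter> {t<..y}))" by simp
    also have "card ((S - {a}) \<inter> {t<..y}) \<le> card (T \<inter> {t<..<y})" using t_unmatched[OF ty] .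
    also have "T \<inter> {b<..<y} = T \<inter> {b<..<t} \<union> insert t (T \<inter> {t<..<y})" using bt ty tT by auto
    then have "card (T \<inter> {b<..<t}) + Suc (card (T \<inter> {t<..<y})) = card (T \<inter> {b<..<y})"
      by (simp add: card_Un_disjoint disjoint_iff)
    finally show False using y(2) by simp
  qed
qed

lemma matched_Diff_psubset:
  assumes "finite S" "finite T" "dom_prec T S" "a \<in> S"
  shows "matched T (S - {a}) \<subset> matched T S"
proof -
  have "card (tri T (S - {a})) \<le> card (S - {a})" by (rule card_tri_le)
  also have "\<dots> < card S" using assms(1,4) by (rule card_Diff1_less)
  also have "\<dots> = card (tri T S)" using assms(1-3) by (rule card_tri_eq[symmetric])
  finally have "card (matched T (S - {a})) < card (matched T S)"
    using assms(1,2) by (simp add: tri_eq_matched)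
  moreover have "matched T (S - {a}) \<subseteq> matched T S" by (rule matched_mono) auto
  ultimately show ?thesis by auto
qed

lemma matched_lost_eq_Min:
  fixes S S' T :: "nat set"
  assumes "finite T" and a: "a \<in> S - S'" and below_a: "\<And>y. y \<in> S \<Longrightarrow> y < a \<Longrightarrow> y \<in> S'"
    and sub: "S' \<subseteq> S" and t: "t \<in> matched T S - matched T (S - {a})"
  shows "t = Min (matched T S - matched T S')"
proof -
  have fin_lost: "finite (matched T S - matched T S')"
    using assms(1) by (rule finite_subset[rotated]) (auto simp: matched_def)
  have "matched T S' \<subseteq> matched T (S - {a})" using a sub by (intro matched_mono) auto
  then have t_lost: "t \<in> matched T S - matched T S'" using t by auto
  then have "Min (matched T S - matched T S') \<in> matched T S - matched T S'"
    using fin_lost by (intro Min_in) auto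
  then have "t \<le> Min (matched T S - matched T S')"
    using a below_a sub t by (intro matched_lost_le) auto
  moreover have "Min (matched T S - matched T S') \<le> t" using fin_lost t_lost by (rule Min_le)
  ultimately show ?thesis by simp
qed

theorem lemma4p15:
  fixes S T S' :: "nat set"
  assumes "finite S" and "finite T"
    and "0 \<notin> S" and "0 \<notin> T"
    and "dom_prec T S"
    and "S' \<subseteq> S" and "S' \<noteq> S"
  shows "tri T (S - {Min (S - S')}) = tri T S - {Min (tri T S - tri T S')}"
proof -
  define a where "a = Min (S - S')"
  have a: "a \<in> S - S'" unfolding a_def using assms(1,6,7) by (intro Min_in) auto
  have below_a: "y \<in> S'" if "y \<in> S" "y < a" for y
    using that assms(1) Min_le[of "S - S'" y] unfolding a_def by (meson DiffI finite_Diff leD)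
  have "matched T (S - {a}) \<subset> matched T S"
    using assms(1,2,5) a by (intro matched_Diff_psubset) auto
  then have "matched T (S - {a}) = matched T S - {Min (matched T S - matched T S')}"
    using matched_lost_eq_Min[OF assms(2) a below_a assms(6)] by blast
  moreover have "finite (S - {a})" "finite S'" using assms(1,6) finite_subset by auto
  ultimately show ?thesis
    using assms(1,2) by (simp add: tri_eq_matched a_def[symmetric])
qed

end
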